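(* Let $\lambda\in\{1,2\}$ and let $u,t,v,w$ be integers such that: $(uw,t)$ satisfies $S_{\lambda,1}$ and $(uw)\cdot v=t^3+t^{\lambda}+1$ (so $uw,t,v$ are consecutive terms of $\langle uw,t\rangle_{S_{\lambda,1}}=\langle t,v\rangle_{S_{2,\lambda}}$); $(vw,t)$ satisfies $S_{\lambda,1}$ (so $vw,t,u$ are consecutive terms of $\langle vw,t\rangle_{S_{\lambda,1}}=\langle t,u\rangle_{S_{2,\lambda}}$); $|t|$ is a prime; and $t\nmid (u-v)$. Then $(-uv,t)$ satisfies $S_{\lambda,1}$, so $-uv,t,-w$ are, in that order, three consecutive terms of a third 4-chain $\langle -uv,t\rangle_{S_{\lambda,1}}=\langle t,-w\rangle_{S_{2,\lambda}}$.
   Context: For $\lambda_a,\lambda_b\in\{1,2\}$, a pair of integers $(x,y)$ satisfies the system $S_{\lambda_a,\lambda_b}$ if $x\mid y^3+y^{\lambda_a}+1$ and $y\mid x^3+x^{\lambda_b}+1$. For such a pair, $\langle x,y\rangle_{S_{\lambda_a,\lambda_b}}$ denotes the bi-infinite integer sequence $(u_n)$ with $u_0=x$, $u_1=y$ and $u_{n-1}u_{n+1}=u_n^3+u_n^{e_n}+1$ for all $n$, where $e_n$ has period 4 with $(e_0,e_1,e_2,e_3)=(\lambda_b,\lambda_a,3-\lambda_b,3-\lambda_a)$; sequences are identified up to shift and reversal of indices. "$u,t,s$, in that order, are three consecutive terms of $\langle u,t\rangle_{S_{\lambda_a,\lambda_b}}$" means $(u,t)$ satisfies $S_{\lambda_a,\lambda_b}$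 and $us=t^3+t^{\lambda_a}+1$. *)

theory Defs
  imports "HOL-Computational_Algebra.Primes"
begin

definition satisfies_S :: "nat \<Rightarrow> nat \<Rightarrow> int \<Rightarrow> int \<Rightarrow> bool" where
  "satisfies_S la lb x y \<longleftrightarrow> x dvd y ^ 3 + y ^ la + 1 \<and> y dvd x ^ 3 + x ^ lb + 1"

text \<open>u, t, s are, in that order, three consecutive terms of the sequence generated by (u,t)
  for S_{la,lb}: (u,t) satisfies S_{la,lb} and u*s = t^3 + t^la + 1.\<close>
definition consec3 :: "nat \<Rightarrow> nat \<Rightarrow> int \<Rightarrow> int \<Rightarrow> int \<Rightarrow> bool" where
  "consec3 la lb u t s \<longleftrightarrow> satisfies_S la lb u t \<and> u * s = t ^ 3 + t ^ la + 1"

end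

theory Submission
  imports Defs "HOL-Number_Theory.Cong"
begin

text \<open>Modulo the prime \<open>p = \<bar>t\<bar>\<close>, both \<open>uw\<close> and \<open>vw\<close> are roots of \<open>z\<^sup>3 + z + 1\<close>, and they are
  distinct because \<open>w\<close> is invertible (indeed \<open>uvw \<equiv> 1\<close>). By Vieta the third root is
  \<open>-(uw + vw)\<close> and the product of the roots gives \<open>uw \<cdot> vw \<cdot> (uw + vw) \<equiv> 1\<close>. Since
  \<open>uw \<cdot> vw = uvw \<cdot> w \<equiv> w\<close>, this says \<open>uw + vw\<close> is the inverse of \<open>w\<close>, i.e. \<open>uw + vw \<equiv> uv\<close>; hence
  \<open>-uv\<close> is a root as well, which is the divisibility \<open>t \<mid> (-uv)\<^sup>3 - uv + 1\<close>.\<close>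

lemma cong_inverse_unique:
  fixes m x y w :: int
  assumes "[x * w = 1] (mod m)" and "[y * w = 1] (mod m)"
  shows "[x = y] (mod m)"
proof -
  have "[x = x * (y * w)] (mod m)"
    using cong_mult[OF cong_refl[of x] assms(2)] by (simp add: cong_sym)
  also have "x * (y * w) = y * (x * w)" by (simp add: algebra_simps)
  also have "[y * (x * w) = y] (mod m)"
    using cong_mult[OF cong_refl[of y] assms(1)] by simp
  finally show ?thesis .
qed

lemma depressed_cubic_third_root_cong:
  fixes p a b c d :: int
  assumes "prime p"
    and root_a: "[a ^ 3 + c * a + d = 0] (mod p)"
    and root_b: "[b ^ 3 + c * b + d = 0] (mod p)"
    and distinct: "[a \<noteq> b] (mod p)"
  shows "[a * b * (a + b) = d] (mod p)"
    and "[(- (a + b)) ^ 3 + c * (- (a + b)) + d = 0] (mod p)"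
proof -
  define q where "q = a ^ 2 + a * b + b ^ 2 + c"
  have "p dvd (a - b) * q"
  proof -
    have "(a - b) * q = (a ^ 3 + c * a + d) - (b ^ 3 + c * b + d)"
      unfolding q_def by algebra
    then show ?thesis
      using root_a root_b by (metis cong_0_iff dvd_diff)
  qed
  moreover have "\<not> p dvd a - b"
    using distinct by (simp add: cong_iff_dvd_diff)
  ultimately have q: "p dvd q"
    using \<open>prime p\<close> prime_dvd_mult_iff by blast
  have "a * b * (a + b) - d = a * q - (a ^ 3 + c * a + d)"
    unfolding q_def by algebra
  then have "p dvd a * b * (a + b) - d"
    using q root_a by (metis cong_0_iff dvd_diff dvd_mult)
  then show "[a * b * (a + b) = d] (mod p)"
    by (simp add: cong_iff_dvd_diff)
  have third: "(- (a + b)) ^ 3 + c * (- (a + b)) + d = - ((a + b) * q) - (a * b * (a + b) - d)"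
    unfolding q_def by algebra
  have "p dvd - ((a + b) * q) - (a * b * (a + b) - d)"
    using q \<open>p dvd a * b * (a + b) - d\<close> by (intro dvd_diff[of p "- ((a + b) * q)"]) simp_all
  then show "[(- (a + b)) ^ 3 + c * (- (a + b)) + d = 0] (mod p)"
    unfolding cong_0_iff third .
qed

lemma neg_product_is_root_of_cubic_cong:
  fixes p u v w c :: int
  assumes "prime \<bar>p\<bar>"
    and inv: "[u * v * w = 1] (mod p)"
    and root_uw: "[(u * w) ^ 3 + c * (u * w) + 1 = 0] (mod p)"
    and root_vw: "[(v * w) ^ 3 + c * (v * w) + 1 = 0] (mod p)"
    and "[u \<noteq> v] (mod p)"
  shows "[(- (u * v)) ^ 3 + c * (- (u * v)) + 1 = 0] (mod p)"
proof -
  have "\<not> p dvd w"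
  proof
    assume "p dvd w"
    then have "p dvd u * v * w - (u * v * w - 1)"
      using inv by (metis cong_iff_dvd_diff dvd_diff dvd_mult)
    then have "p dvd 1" by simp
    with \<open>prime \<bar>p\<bar>\<close> show False by simp
  qed
  then have "[u * w \<noteq> v * w] (mod p)"
    using assms(1,5) prime_dvd_mult_iff[of "\<bar>p\<bar>" "u - v" w]
    by (simp add: cong_iff_dvd_diff left_diff_distrib)
  from depressed_cubic_third_root_cong[OF assms(1), simplified, OF root_uw root_vw this]
  have prod: "[u * w * (v * w) * (u * w + v * w) = 1] (mod p)"
    and third_root: "[(- (u * w + v * w)) ^ 3 + c * (- (u * w + v * w)) + 1 = 0] (mod p)"
    by simp_all
  have "[(u * w + v * w) * w = u * v * w * ((u * w + v * w) * w)] (mod p)"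
    using cong_mult[OF inv cong_refl[of "(u * w + v * w) * w"]] by (simp add: cong_sym)
  also have "u * v * w * ((u * w + v * w) * w) = u * w * (v * w) * (u * w + v * w)"
    by algebra
  also note prod
  finally have "[u * w + v * w = u * v] (mod p)"
    using inv by (rule cong_inverse_unique)
  then have sum: "[- (u * v) = - (u * w + v * w)] (mod p)"
    by (simp only: cong_minus_minus_iff cong_sym_eq)
  have "[(- (u * v)) ^ 3 + c * (- (u * v)) + 1
         = (- (u * w + v * w)) ^ 3 + c * (- (u * w + v * w)) + 1] (mod p)"
    using cong_add[OF cong_add[OF cong_pow[OF sum] cong_mult[OF cong_refl sum]] cong_refl] .
  also note third_root
  finally show ?thesis .
qed

theorem theorem13:
  fixes lam :: nat and u t v w :: int
  assumes "lam \<in> {1, 2}"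
    and "consec3 lam 1 (u * w) t v"
    and "satisfies_S lam 1 (v * w) t"
    and "prime \<bar>t\<bar>"
    and "\<not> t dvd (u - v)"
  shows "satisfies_S lam 1 (- (u * v)) t \<and> consec3 lam 1 (- (u * v)) t (- w)"
proof -
  have norm: "u * v * w = t ^ 3 + t ^ lam + 1"
    using assms(2) by (simp add: consec3_def algebra_simps)
  have "[u * v * w = 1] (mod t)"
    using assms(1) norm by (auto simp: cong_iff_dvd_diff)
  moreover have "[(u * w) ^ 3 + 1 * (u * w) + 1 = 0] (mod t)"
    using assms(2) by (simp add: consec3_def satisfies_S_def cong_0_iff)
  moreover have "[(v * w) ^ 3 + 1 * (v * w) + 1 = 0] (mod t)"
    using assms(3) by (simp add: satisfies_S_def cong_0_iff)
  moreover have "[u \<noteq> v] (mod t)"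
    using assms(5) by (simp add: cong_iff_dvd_diff)
  ultimately have "[(- (u * v)) ^ 3 + 1 * (- (u * v)) + 1 = 0] (mod t)"
    by (rule neg_product_is_root_of_cubic_cong[OF assms(4)])
  then have "t dvd (- (u * v)) ^ 3 + (- (u * v)) ^ 1 + 1"
    by (simp add: cong_0_iff)
  moreover have "- (u * v) * - w = t ^ 3 + t ^ lam + 1"
    using norm by simp
  ultimately show ?thesis
    unfolding consec3_def satisfies_S_def by (metis dvd_triv_left)
qed

end
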